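(* Let $(\xi_j)_{j=1}^\infty$ be an i.i.d. sequence of strictly positive random variables, let $\xi$ have the common distribution, and let \[ Y = 1 + \xi_1 + \xi_1\xi_2 + \xi_1\xi_2\xi_3 + \cdots = \sum_{k=0}^{\infty} \prod_{j=1}^{k} \xi_j \] (empty product equal to $1$). For real $q$ write $\mu_q = \mathbb{E}(\xi^q)$. Then for every real $p \ge 1$: $\mathbb{E}(Y^p) < \infty$ if and only if $\mu_p < 1$. Moreover, if $\mu_p<1$, then $\mu_q < 1$ for every real $1 \le q \le p$ and \[ \mathbb{E}(Y^p) \le \bigl(1 - \mu_p^{1/p}\bigr)^{-p}; \] and if in addition $p \ge 1$ is an integer, then \[ \mathbb{E}(Y^p) = \frac{1}{1-\mu_p} \sum_{k=0}^{p-1} \binom{p}{k} \mu_k \, \mathbb{E}(Y^k). \] *)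

theory Defs
  imports "HOL-Probability.Probability"
begin

text \<open>The perpetuity Y = sum over k of the product of xi_1 ... xi_k (empty product 1),
  as an extended nonnegative real (it may diverge). Indices are shifted: xi 0 is xi_1.\<close>
definition perp :: "(nat \<Rightarrow> 'a \<Rightarrow> real) \<Rightarrow> 'a \<Rightarrow> ennreal" where
  "perp xi \<omega> = (\<Sum>k. ennreal (\<Prod>j<k. xi j \<omega>))"

definition ennpow :: "ennreal \<Rightarrow> real \<Rightarrow> ennreal" where
  "ennpow x p = (if p = 0 then 1 else if x = \<infinity> then \<infinity> else ennreal (enn2real x powr p))"

text \<open>mu_q = E(xi^q) for the common distribution (represented by xi 0).\<close>
definition mom :: "'a measure \<Rightarrow> (nat \<Rightarrow> 'a \<Rightarrow> real) \<Rightarrow> real \<Rightarrow> ennreal" where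
  "mom M xi q = (\<integral>\<^sup>+ \<omega>. ennreal (xi 0 \<omega> powr q) \<partial>M)"

definition perp_mom :: "'a measure \<Rightarrow> (nat \<Rightarrow> 'a \<Rightarrow> real) \<Rightarrow> real \<Rightarrow> ennreal" where
  "perp_mom M xi p = (\<integral>\<^sup>+ \<omega>. ennpow (perp xi \<omega>) p \<partial>M)"

end

theory Submission
  imports Defs
begin

text \<open>
  Write \<open>a\<^sub>k = \<xi>\<^sub>1 \<cdots> \<xi>\<^sub>k\<close> and \<open>\<mu> = \<mu>\<^sub>p\<close>. Pointwise \<open>(\<Sum> a\<^sub>k)\<^sup>p \<ge> \<Sum> a\<^sub>k\<^sup>p\<close>, and by
  independence \<open>E(a\<^sub>k\<^sup>p) = \<mu>\<^sup>k\<close>, so \<open>E(Y\<^sup>p) \<ge> \<Sum> \<mu>\<^sup>k\<close>, which is infinite when \<open>\<mu> \<ge> 1\<close>.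
  Conversely, Jensen's inequality with the geometric weights \<open>w\<^sub>k = (1 - m) m\<^sup>k\<close>,
  \<open>m = \<mu>\<^bsup>1/p\<^esup>\<close>, gives \<open>Y\<^sup>p \<le> \<Sum> w\<^sub>k\<^bsup>1-p\<^esup> a\<^sub>k\<^sup>p\<close>, whose expectation sums to \<open>(1 - m)\<^bsup>-p\<^esup>\<close>.
  For integral \<open>p = n\<close>, the decomposition \<open>Y = 1 + \<xi>\<^sub>1 Y'\<close>, with the shifted perpetuity
  \<open>Y'\<close> independent of \<open>\<xi>\<^sub>1\<close> and distributed like \<open>Y\<close>, and the binomial theorem give
  \<open>E(Y\<^sup>n) = \<Sum>\<^sub>k\<^sub>\<le>\<^sub>n (n choose k) \<mu>\<^sub>k E(Y\<^sup>k)\<close>; the top term \<open>\<mu>\<^sub>n E(Y\<^sup>n)\<close> can be moved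
  to the left because \<open>E(Y\<^sup>n)\<close> is finite.
\<close>

lemma ennpow_of_nat: "ennpow x (real n) = x ^ n"
proof (cases "n = 0")
  case True then show ?thesis by (simp add: ennpow_def)
next
  case n: False
  show ?thesis
  proof (cases x)
    case (real r)
    then have "r powr real n = r ^ n"
      using n by (cases "r = 0") (simp_all add: powr_realpow)
    with n real show ?thesis by (simp add: ennpow_def ennreal_power)
  qed (use n in \<open>simp add: ennpow_def\<close>)
qed

lemma ennpow_ennreal: "p \<noteq> 0 \<Longrightarrow> r \<ge> 0 \<Longrightarrow> ennpow (ennreal r) p = ennreal (r powr p)"
  by (simp add: ennpow_def)

lemma ennpow_mono:
  assumes "x \<le> y" "p \<ge> 0" shows "ennpow x p \<le> ennpow y p"
proof (cases "p = 0 \<or> y = \<infinity>")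
  case True then show ?thesis by (auto simp: ennpow_def)
next
  case False
  then obtain b where b: "y = ennreal b" "b \<ge> 0" by (cases y) auto
  with assms obtain a where a: "x = ennreal a" "a \<ge> 0" "a \<le> b"
    by (cases x) (auto simp: ennreal_le_iff top_unique)
  show ?thesis using a b False assms by (simp add: ennpow_def powr_mono2 ennreal_leI)
qed

lemma ennpow_SUP_le:
  assumes p: "p > 0" and s: "\<And>n. s n \<ge> 0"
    and le: "\<And>n. ennpow (ennreal (s n)) p \<le> R"
  shows "ennpow (SUP n. ennreal (s n)) p \<le> R"
proof (cases R)
  case (real r)
  have "s n \<le> r powr (1/p)" for n
  proof -
    have "s n powr p \<le> r" using le[of n] p s[of n] real by (simp add: ennpow_def ennreal_le_iff)
    then have "(s n powr p) powr (1/p) \<le> r powr (1/p)" using p by (intro powr_mono2) auto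
    then show ?thesis using p s[of n] by (simp add: powr_powr)
  qed
  then have "(SUP n. ennreal (s n)) \<le> ennreal (r powr (1/p))"
    by (intro SUP_least ennreal_leI)
  then obtain y where y: "(SUP n. ennreal (s n)) = ennreal y" "y \<ge> 0" "y \<le> r powr (1/p)"
    by (cases "(SUP n. ennreal (s n))") (auto simp: ennreal_le_iff top_unique)
  have "y powr p \<le> (r powr (1/p)) powr p" using y p by (intro powr_mono2) auto
  also have "\<dots> = r" using p real by (simp add: powr_powr)
  finally show ?thesis using y p real by (simp add: ennpow_def ennreal_leI)
qed simp

lemma sum_powr_le_powr_sum:
  fixes a :: "'i \<Rightarrow> real"
  assumes "finite A" "\<And>k. k \<in> A \<Longrightarrow> a k \<ge> 0" "p \<ge> 1"
  shows "(\<Sum>k\<in>A. a k powr p) \<le> (\<Sum>k\<in>A. a k) powr p"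
proof -
  let ?s = "\<Sum>k\<in>A. a k"
  have "a k powr p \<le> a k * ?s powr (p - 1)" if "k \<in> A" for k
  proof (cases "a k = 0")
    case False
    then have pos: "a k > 0" using assms that by force
    have "a k \<le> ?s" using assms that by (intro member_le_sum) auto
    then have "a k * a k powr (p - 1) \<le> a k * ?s powr (p - 1)"
      using pos assms by (intro mult_left_mono powr_mono2) auto
    then show ?thesis using pos by (simp add: powr_diff)
  qed (use assms in simp)
  then have "(\<Sum>k\<in>A. a k powr p) \<le> (\<Sum>k\<in>A. a k * ?s powr (p - 1))" by (rule sum_mono)
  also have "\<dots> = ?s * ?s powr (p - 1)" by (simp add: sum_distrib_right)
  also have "\<dots> = ?s powr p"
    using assms by (cases "?s = 0") (simp_all add: powr_diff sum_nonneg)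
  finally show ?thesis .
qed

text \<open>Jensen's inequality for \<open>t \<mapsto> t\<^sup>p\<close> with the points \<open>x\<^sub>k / w\<^sub>k\<close>; a total weight
  below \<open>1\<close> only helps because \<open>p - 1 \<ge> 0\<close>.\<close>
lemma powr_sum_le_weighted_sum:
  fixes x w :: "nat \<Rightarrow> real"
  assumes p: "p \<ge> 1" and n: "n > 0" and x: "\<And>k. k < n \<Longrightarrow> x k > 0"
    and w: "\<And>k. k < n \<Longrightarrow> w k > 0" and S1: "(\<Sum>k<n. w k) \<le> 1"
  shows "(\<Sum>k<n. x k) powr p \<le> (\<Sum>k<n. w k powr (1 - p) * x k powr p)"
proof -
  define S where "S = (\<Sum>k<n. w k)"
  have S0: "S > 0" unfolding S_def using n w by (intro sum_pos) auto
  have a1: "(\<Sum>k<n. w k / S) = 1" using S0 by (simp add: S_def flip: sum_divide_distrib)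
  have "(\<Sum>k<n. (w k / S) *\<^sub>R (x k / w k)) powr p \<le> (\<Sum>k<n. (w k / S) * (x k / w k) powr p)"
    using n S0 w x
    by (intro convex_on_sum[OF _ _ powr_convex[OF p] a1]) (auto simp: less_imp_le)
  moreover have "(\<Sum>k<n. (w k / S) *\<^sub>R (x k / w k)) = (\<Sum>k<n. x k) / S"
    using w by (auto simp: sum_divide_distrib intro!: sum.cong) (metis less_irrefl)
  ultimately have jensen: "((\<Sum>k<n. x k) / S) powr p \<le> (\<Sum>k<n. (w k / S) * (x k / w k) powr p)"
    by simp
  have "(\<Sum>k<n. x k) powr p = S powr p * ((\<Sum>k<n. x k) / S) powr p"
    using S0 x by (simp add: powr_divide sum_nonneg less_imp_le)
  also have "\<dots> \<le> S powr p * (\<Sum>k<n. (w k / S) * (x k / w k) powr p)"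
    using jensen by (intro mult_left_mono) auto
  also have "\<dots> = S powr (p - 1) * (\<Sum>k<n. w k * (x k / w k) powr p)"
    using S0 by (simp add: sum_distrib_left powr_diff field_simps)
  also have "\<dots> \<le> 1 * (\<Sum>k<n. w k * (x k / w k) powr p)"
    using S0 S1 p w x less_imp_le[OF w] unfolding S_def[symmetric]
    by (intro mult_right_mono powr_le1 sum_nonneg) (auto intro!: mult_nonneg_nonneg)
  also have "\<dots> = (\<Sum>k<n. w k powr (1 - p) * x k powr p)"
    using w x by (auto intro!: sum.cong simp: powr_divide powr_diff less_imp_le)
  finally show ?thesis .
qed

lemma geometric_weights_sums:
  fixes m p :: real
  assumes "0 < m" "m < 1"
  shows "(\<lambda>k. ((1 - m) * m ^ k) powr (1 - p) * (m powr p) ^ k) sums ((1 - m) powr (- p))"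
proof -
  have "((1 - m) * m ^ k) powr (1 - p) * (m powr p) ^ k = (1 - m) powr (1 - p) * m ^ k" for k
  proof -
    have "((1 - m) * m ^ k) powr (1 - p) * (m powr p) ^ k
        = (1 - m) powr (1 - p) * (m powr (real k * (1 - p)) * m powr (p * real k))"
      using assms by (simp add: powr_mult powr_powr powr_realpow[symmetric])
    also have "\<dots> = (1 - m) powr (1 - p) * m ^ k"
      using assms by (simp add: powr_add[symmetric] algebra_simps powr_realpow)
    finally show ?thesis .
  qed
  moreover have "(1 - m) powr (1 - p) * (1 / (1 - m)) = (1 - m) powr (- p)"
    using assms by (simp add: powr_diff[of _ 1 p, simplified] powr_minus divide_simps)
  moreover have "(\<lambda>k. (1 - m) powr (1 - p) * m ^ k) sums ((1 - m) powr (1 - p) * (1 / (1 - m)))"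
    using assms by (intro sums_mult geometric_sums) auto
  ultimately show ?thesis by simp
qed

lemma ennreal_affine_fixpoint:
  fixes A b S :: ennreal
  assumes "A < \<infinity>" "b < 1" "A = S + b * A"
  shows "A = 1 / (1 - b) * S"
proof -
  have "S < \<infinity>" using assms by (metis le_iff_add le_less_trans)
  then obtain s where s: "S = ennreal s" "0 \<le> s" by (cases S) auto
  obtain a where a: "A = ennreal a" "0 \<le> a" using assms by (cases A) auto
  obtain c where c: "b = ennreal c" "0 \<le> c" "c < 1"
    using assms by (cases b) (auto simp: ennreal_less_iff)
  have "ennreal a = ennreal (s + c * a)" using assms a s c by (simp add: ennreal_plus ennreal_mult)
  then have "a = s + c * a" using a s c by (subst (asm) ennreal_inj) auto
  then have "a = 1 / (1 - c) * s" using c by (simp add: field_simps)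
  moreover have "1 / (1 - b) = ennreal (1 / (1 - c))"
    using c ennreal_minus[of c 1] divide_ennreal[of 1 "1 - c"] by simp
  ultimately show ?thesis
    using a s c by (simp add: ennreal_mult[symmetric])
qed

definition perpetuity :: "(nat \<Rightarrow> real) \<Rightarrow> ennreal" where
  "perpetuity f = (\<Sum>k. ennreal (\<Prod>j<k. f j))"

lemma perp_eq_perpetuity: "perp xi \<omega> = perpetuity (\<lambda>i. xi i \<omega>)"
  by (simp add: perp_def perpetuity_def)

lemma measurable_perpetuity[measurable]:
  "perpetuity \<in> borel_measurable (PiM UNIV (\<lambda>_. borel :: real measure))"
  unfolding perpetuity_def[abs_def] by measurable

lemma perpetuity_Suc:
  assumes "\<And>j. f j \<ge> 0"
  shows "perpetuity f = 1 + ennreal (f 0) * perpetuity (\<lambda>i. f (Suc i))"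
proof -
  let ?a = "\<lambda>k. ennreal (\<Prod>j<k. f j)"
  have "(\<lambda>k. ?a (Suc k)) sums (\<Sum>k. ?a (Suc k))" by (rule summable_sums) (rule summableI)
  then have "?a sums ((\<Sum>k. ?a (Suc k)) + ?a 0)" by (rule sums_Suc)
  then have "perpetuity f = 1 + (\<Sum>k. ?a (Suc k))"
    by (simp add: perpetuity_def sums_unique[symmetric] add.commute)
  also have "(\<Sum>k. ?a (Suc k)) = (\<Sum>k. ennreal (f 0) * ennreal (\<Prod>j<k. f (Suc j)))"
    using assms by (simp only: prod.lessThan_Suc_shift) (simp add: ennreal_mult prod_nonneg)
  finally show ?thesis by (simp add: perpetuity_def)
qed

lemma perpetuity_eq_SUP:
  assumes "\<And>j. f j \<ge> 0"
  shows "perpetuity f = (SUP n. ennreal (\<Sum>k<n. \<Prod>j<k. f j))"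
  using assms unfolding perpetuity_def suminf_eq_SUP by (simp add: sum_ennreal prod_nonneg)

lemma sum_prod_powr_le_ennpow_perpetuity:
  assumes f: "\<And>j. f j \<ge> 0" and p: "p \<ge> 1"
  shows "(\<Sum>k<n. ennreal (\<Prod>j<k. f j powr p)) \<le> ennpow (perpetuity f) p"
proof -
  have "(\<Sum>k<n. ennreal (\<Prod>j<k. f j powr p)) = ennreal (\<Sum>k<n. (\<Prod>j<k. f j) powr p)"
    using f by (simp add: sum_ennreal prod_powr_distrib prod_nonneg)
  also have "\<dots> \<le> ennreal ((\<Sum>k<n. \<Prod>j<k. f j) powr p)"
    using f p by (intro ennreal_leI sum_powr_le_powr_sum) (auto intro: prod_nonneg)
  also have "\<dots> = ennpow (ennreal (\<Sum>k<n. \<Prod>j<k. f j)) p"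
    using f p by (simp add: ennpow_ennreal sum_nonneg prod_nonneg)
  also have "\<dots> \<le> ennpow (perpetuity f) p"
    using f p by (intro ennpow_mono) (auto simp: perpetuity_eq_SUP intro: SUP_upper)
  finally show ?thesis .
qed

lemma ennpow_perpetuity_le_weighted:
  assumes f: "\<And>j. f j > 0" and p: "p \<ge> 1"
    and w: "\<And>k. w k > 0" and w_sum: "\<And>n. (\<Sum>k<n. w k) \<le> 1"
  shows "ennpow (perpetuity f) p \<le> (\<Sum>k. ennreal (w k powr (1 - p) * (\<Prod>j<k. f j powr p)))"
    (is "_ \<le> ?R")
  unfolding perpetuity_eq_SUP[OF less_imp_le[OF f]]
proof (rule ennpow_SUP_le)
  show "p > 0" "0 \<le> (\<Sum>k<n. \<Prod>j<k. f j)" for n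
    using p f by (auto intro!: sum_nonneg prod_nonneg simp: less_imp_le)
  fix n
  have "(\<Sum>k<n. \<Prod>j<k. f j) powr p \<le> (\<Sum>k<n. w k powr (1 - p) * (\<Prod>j<k. f j powr p))"
  proof (cases "n = 0")
    case False
    then show ?thesis
      using powr_sum_le_weighted_sum[OF p, of n "\<lambda>k. \<Prod>j<k. f j" w] f w w_sum
      by (simp add: prod_pos prod_powr_distrib less_imp_le)
  qed simp
  then have "ennpow (ennreal (\<Sum>k<n. \<Prod>j<k. f j)) p
      \<le> ennreal (\<Sum>k<n. w k powr (1 - p) * (\<Prod>j<k. f j powr p))"
    using p f by (simp add: ennpow_ennreal ennreal_leI sum_nonneg prod_nonneg less_imp_le)
  also have "\<dots> = (\<Sum>k<n. ennreal (w k powr (1 - p) * (\<Prod>j<k. f j powr p)))"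
    by (simp add: sum_ennreal prod_nonneg)
  also have "\<dots> \<le> ?R" by (intro sum_le_suminf) auto
  finally show "ennpow (ennreal (\<Sum>k<n. \<Prod>j<k. f j)) p \<le> ?R" .
qed

lemma (in prob_space) indep_var_nn_integral_mult:
  fixes f g :: "'b \<Rightarrow> ennreal"
  assumes ind: "indep_var S X T Y"
    and [measurable]: "f \<in> borel_measurable S" "g \<in> borel_measurable T"
  shows "(\<integral>\<^sup>+\<omega>. f (X \<omega>) * g (Y \<omega>) \<partial>M) = (\<integral>\<^sup>+\<omega>. f (X \<omega>) \<partial>M) * (\<integral>\<^sup>+\<omega>. g (Y \<omega>) \<partial>M)"
proof -
  have [measurable]: "X \<in> measurable M S" "Y \<in> measurable M T"
    using indep_var_rv1[OF ind] indep_var_rv2[OF ind] by auto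
  have distr_pair: "distr M (S \<Otimes>\<^sub>M T) (\<lambda>x. (X x, Y x)) = distr M S X \<Otimes>\<^sub>M distr M T Y"
    using ind by (simp add: indep_var_distribution_eq)
  interpret SX: prob_space "distr M S X" by (rule prob_space_distr) simp
  interpret TY: prob_space "distr M T Y" by (rule prob_space_distr) simp
  interpret pair_prob_space "distr M S X" "distr M T Y" ..
  have "sets (distr M S X \<Otimes>\<^sub>M distr M T Y) = sets (S \<Otimes>\<^sub>M T)"
    by (intro sets_pair_measure_cong) auto
  then have fg: "(\<lambda>z. f (fst z) * g (snd z)) \<in> borel_measurable (distr M S X \<Otimes>\<^sub>M distr M T Y)"
    by (subst measurable_cong_sets[OF _ refl]) measurable
  have "(\<integral>\<^sup>+\<omega>. f (X \<omega>) * g (Y \<omega>) \<partial>M)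
      = (\<integral>\<^sup>+z. f (fst z) * g (snd z) \<partial>distr M (S \<Otimes>\<^sub>M T) (\<lambda>x. (X x, Y x)))"
    by (subst nn_integral_distr) auto
  also have "\<dots> = (\<integral>\<^sup>+z. f (fst z) * g (snd z) \<partial>(distr M S X \<Otimes>\<^sub>M distr M T Y))"
    by (simp add: distr_pair)
  also have "\<dots> = (\<integral>\<^sup>+x. \<integral>\<^sup>+y. f x * g y \<partial>distr M T Y \<partial>distr M S X)"
    using TY.nn_integral_fst[of "\<lambda>z. f (fst z) * g (snd z)" "distr M S X"] fg by simp
  also have "\<dots> = (\<integral>\<^sup>+x. f x \<partial>distr M S X) * (\<integral>\<^sup>+y. g y \<partial>distr M T Y)"
    by (simp add: nn_integral_cmult nn_integral_multc)
  also have "\<dots> = (\<integral>\<^sup>+\<omega>. f (X \<omega>) \<partial>M) * (\<integral>\<^sup>+\<omega>. g (Y \<omega>) \<partial>M)"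
    by (simp add: nn_integral_distr)
  finally show ?thesis .
qed

locale positive_iid_sequence = prob_space M for M :: "'a measure" +
  fixes xi :: "nat \<Rightarrow> 'a \<Rightarrow> real"
  assumes measurable_xi[measurable]: "\<And>i. xi i \<in> borel_measurable M"
    and indep_xi: "indep_vars (\<lambda>_. borel) xi UNIV"
    and distr_xi: "\<And>i. distr M borel (xi i) = distr M borel (xi 0)"
    and xi_pos: "\<And>i \<omega>. \<omega> \<in> space M \<Longrightarrow> xi i \<omega> > 0"
begin

lemma measurable_xi_seq[measurable]:
  "(\<lambda>\<omega> i. xi i \<omega>) \<in> measurable M (PiM UNIV (\<lambda>_. borel :: real measure))"
  "(\<lambda>\<omega> i. xi (Suc i) \<omega>) \<in> measurable M (PiM UNIV (\<lambda>_. borel :: real measure))"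
  by (auto intro: measurable_PiM_single')

lemma nn_integral_xi_eq_xi0:
  fixes g :: "real \<Rightarrow> ennreal"
  assumes [measurable]: "g \<in> borel_measurable borel"
  shows "(\<integral>\<^sup>+\<omega>. g (xi i \<omega>) \<partial>M) = (\<integral>\<^sup>+\<omega>. g (xi 0 \<omega>) \<partial>M)"
proof -
  have "(\<integral>\<^sup>+\<omega>. g (xi i \<omega>) \<partial>M) = (\<integral>\<^sup>+x. g x \<partial>distr M borel (xi i))"
    by (simp add: nn_integral_distr)
  also have "\<dots> = (\<integral>\<^sup>+\<omega>. g (xi 0 \<omega>) \<partial>M)"
    by (simp add: distr_xi[of i] nn_integral_distr)
  finally show ?thesis .
qed

lemma nn_integral_prod_powr: "(\<integral>\<^sup>+\<omega>. ennreal (\<Prod>j<k. xi j \<omega> powr q) \<partial>M) = mom M xi q ^ k"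
proof -
  have "indep_vars (\<lambda>_. borel) (\<lambda>j \<omega>. ennreal (xi j \<omega> powr q)) {..<k}"
    by (rule indep_vars_subset[OF indep_vars_compose2[OF indep_xi]]) auto
  then have "(\<integral>\<^sup>+\<omega>. (\<Prod>j<k. ennreal (xi j \<omega> powr q)) \<partial>M) = (\<Prod>j<k. \<integral>\<^sup>+\<omega>. ennreal (xi j \<omega> powr q) \<partial>M)"
    by (intro indep_vars_nn_integral) auto
  also have "\<dots> = (\<Prod>j<k. mom M xi q)"
    unfolding mom_def by (intro prod.cong refl nn_integral_xi_eq_xi0) auto
  finally show ?thesis by (simp add: prod_ennreal)
qed

lemma mom_pos: "mom M xi q > 0"
proof (rule ccontr)
  assume "\<not> mom M xi q > 0"
  then have "AE \<omega> in M. ennreal (xi 0 \<omega> powr q) = 0"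
    by (simp add: mom_def nn_integral_0_iff_AE)
  moreover have "AE \<omega> in M. ennreal (xi 0 \<omega> powr q) \<noteq> 0"
    using xi_pos[of _ 0] by (intro AE_I2) force
  ultimately have "AE \<omega> in M. False" by eventually_elim auto
  then show False by simp
qed

lemma sum_mom_power_le_perp_mom:
  assumes "p \<ge> 1"
  shows "(\<Sum>k<n. mom M xi p ^ k) \<le> perp_mom M xi p"
proof -
  have "(\<Sum>k<n. mom M xi p ^ k) = (\<integral>\<^sup>+\<omega>. (\<Sum>k<n. ennreal (\<Prod>j<k. xi j \<omega> powr p)) \<partial>M)"
    by (simp add: nn_integral_sum nn_integral_prod_powr)
  also have "\<dots> \<le> perp_mom M xi p"
    unfolding perp_mom_def perp_eq_perpetuity using assms xi_pos
    by (intro nn_integral_mono sum_prod_powr_le_ennpow_perpetuity) (auto simp: less_imp_le)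
  finally show ?thesis .
qed

lemma perp_mom_eq_top:
  assumes "p \<ge> 1" "mom M xi p \<ge> 1"
  shows "perp_mom M xi p = \<infinity>"
proof (rule ccontr)
  assume "perp_mom M xi p \<noteq> \<infinity>"
  then obtain n where n: "perp_mom M xi p < of_nat n"
    by (metis ennreal_Ex_less_of_nat infinity_ennreal_def top.not_eq_extremum)
  have "(of_nat n :: ennreal) = (\<Sum>k<n. 1)" by simp
  also have "\<dots> \<le> (\<Sum>k<n. mom M xi p ^ k)" using assms by (intro sum_mono one_le_power) auto
  also have "\<dots> \<le> perp_mom M xi p" using assms(1) by (rule sum_mom_power_le_perp_mom)
  finally show False using n by simp
qed

lemma mom_less_one_mono:
  assumes p: "mom M xi p < 1" and q: "0 < q" "q \<le> p"
  shows "mom M xi q < 1"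
proof -
  define l where "l = q / p"
  have l: "0 < l" "l \<le> 1" using q by (auto simp: l_def)
  have young: "xi 0 \<omega> powr q \<le> l * xi 0 \<omega> powr p + (1 - l)" if "\<omega> \<in> space M" for \<omega>
  proof -
    have "(xi 0 \<omega> powr p) powr l * 1 powr (1 - l) \<le> l * xi 0 \<omega> powr p + (1 - l) * 1"
      using l xi_pos[OF that, of 0] by (intro Youngs_inequality_0) auto
    then show ?thesis using l q xi_pos[OF that, of 0] by (simp add: powr_powr l_def)
  qed
  obtain a where a: "mom M xi p = ennreal a" "0 \<le> a" "a < 1"
    using p by (cases "mom M xi p") (auto simp: ennreal_less_iff)
  have "mom M xi q \<le> (\<integral>\<^sup>+\<omega>. ennreal l * ennreal (xi 0 \<omega> powr p) + ennreal (1 - l) \<partial>M)"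
    unfolding mom_def using young l
    by (intro nn_integral_mono) (simp add: ennreal_plus[symmetric] ennreal_mult[symmetric] del: ennreal_plus)
  also have "\<dots> = ennreal (l * a + (1 - l))"
    using l a
    by (simp add: mom_def nn_integral_add nn_integral_cmult emeasure_space_1 ennreal_plus ennreal_mult)
  also have "\<dots> < 1"
  proof -
    have "l * a + (1 - l) < 1" using mult_strict_left_mono[OF a(3) l(1)] by simp
    from ennreal_lessI[OF zero_less_one this] show ?thesis by simp
  qed
  finally show ?thesis .
qed

lemma perp_mom_le:
  assumes p: "p \<ge> 1" and "mom M xi p < 1"
  shows "perp_mom M xi p \<le> ennreal ((1 - enn2real (mom M xi p) powr (1 / p)) powr (- p))"
proof -
  obtain \<mu> where mu: "mom M xi p = ennreal \<mu>" "0 < \<mu>" "\<mu> < 1"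
    using assms mom_pos[of p] by (cases "mom M xi p") (auto simp: ennreal_less_iff)
  define m where "m = \<mu> powr (1/p)"
  have m: "0 < m" "m < 1" "m powr p = \<mu>"
    using mu p powr_less_mono2[of "1/p" \<mu> 1] by (auto simp: m_def powr_powr)
  define w where "w k = (1 - m) * m ^ k" for k
  have w_sum: "(\<Sum>k<n. w k) \<le> 1" for n
    using m by (simp add: w_def flip: sum_distrib_left) (simp add: sum_gp_strict)
  have "perp_mom M xi p \<le> (\<integral>\<^sup>+\<omega>. (\<Sum>k. ennreal (w k powr (1 - p) * (\<Prod>j<k. xi j \<omega> powr p))) \<partial>M)"
    unfolding perp_mom_def perp_eq_perpetuity using p m xi_pos w_sum
    by (intro nn_integral_mono ennpow_perpetuity_le_weighted) (auto simp: w_def)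
  also have "\<dots> = (\<Sum>k. ennreal (w k powr (1 - p)) * mom M xi p ^ k)"
    by (simp add: nn_integral_suminf ennreal_mult prod_nonneg nn_integral_cmult nn_integral_prod_powr)
  also have "\<dots> = (\<Sum>k. ennreal (w k powr (1 - p) * (m powr p) ^ k))"
    using m mu by (simp add: ennreal_mult ennreal_power)
  also have "\<dots> = ennreal ((1 - m) powr (- p))"
    using m geometric_weights_sums[of m p] by (intro suminf_ennreal_eq) (auto simp: w_def)
  finally show ?thesis using mu by (simp add: m_def)
qed

lemma indep_var_head_tail:
  "indep_var (PiM UNIV (\<lambda>_. borel)) (\<lambda>\<omega> (i::nat). xi 0 \<omega>)
             (PiM UNIV (\<lambda>_. borel)) (\<lambda>\<omega> i. xi (Suc i) \<omega>)"
proof -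
  have "indep_var (PiM {0} (\<lambda>_. borel)) (\<lambda>\<omega>. restrict (\<lambda>i. xi i \<omega>) {0})
                  (PiM (range Suc) (\<lambda>_. borel)) (\<lambda>\<omega>. restrict (\<lambda>i. xi i \<omega>) (range Suc))"
    by (rule indep_var_restrict[OF indep_xi]) auto
  moreover have "(\<lambda>f. \<lambda>i::nat. f 0) \<in> measurable (PiM {0::nat} (\<lambda>_. borel)) (PiM UNIV (\<lambda>_. borel :: real measure))"
    "(\<lambda>f. \<lambda>i::nat. f (Suc i)) \<in> measurable (PiM (range Suc) (\<lambda>_. borel)) (PiM UNIV (\<lambda>_. borel :: real measure))"
    by (auto intro!: measurable_PiM_single')
  ultimately show ?thesis
    by (auto dest: indep_var_compose simp: comp_def)
qed

lemma nn_integral_shift: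
  assumes F[measurable]: "F \<in> borel_measurable (PiM UNIV (\<lambda>_. borel :: real measure))"
  shows "(\<integral>\<^sup>+\<omega>. F (\<lambda>i. xi (Suc i) \<omega>) \<partial>M) = (\<integral>\<^sup>+\<omega>. F (\<lambda>i. xi i \<omega>) \<partial>M)"
proof -
  let ?B = "PiM UNIV (\<lambda>_. borel :: real measure)"
  let ?P = "PiM UNIV (\<lambda>_::nat. distr M borel (xi 0))"
  let ?shift = "\<lambda>f. \<lambda>n\<in>UNIV. f (Suc n)"
  have "distr M ?B (\<lambda>\<omega>. \<lambda>i\<in>UNIV. xi i \<omega>) = (\<Pi>\<^sub>M i\<in>UNIV. distr M borel (xi i))"
    by (rule indep_vars_iff_distr_eq_PiM[THEN iffD1, OF _ _ indep_xi]) auto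
  moreover have "(\<lambda>i. distr M borel (xi i)) = (\<lambda>_. distr M borel (xi 0))"
    by (rule ext) (rule distr_xi)
  ultimately have law: "distr M ?B (\<lambda>\<omega> i. xi i \<omega>) = ?P"
    by (simp add: restrict_UNIV)
  have sets_P: "sets ?P = sets ?B" by (intro sets_PiM_cong) auto
  have [measurable]: "F \<in> borel_measurable ?P"
    unfolding measurable_cong_sets[OF sets_P refl] by simp
  have [measurable]: "?shift \<in> measurable ?P ?P"
    unfolding measurable_cong_sets[OF sets_P sets_P] by (rule measurable_PiM_single') auto
  have [measurable]: "(\<lambda>f n. f (Suc n)) \<in> measurable ?B ?B"
    by (rule measurable_PiM_single') auto
  have "(\<integral>\<^sup>+\<omega>. F (\<lambda>i. xi (Suc i) \<omega>) \<partial>M) = (\<integral>\<^sup>+f. F (?shift f) \<partial>distr M ?B (\<lambda>\<omega> i. xi i \<omega>))"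
    by (subst nn_integral_distr) (auto simp: restrict_UNIV)
  also have "\<dots> = (\<integral>\<^sup>+f. F f \<partial>distr ?P ?P ?shift)"
    unfolding law by (subst nn_integral_distr) auto
  also have "distr ?P ?P ?shift = ?P"
    using distr_PiM_reindex[of UNIV "\<lambda>_. distr M borel (xi 0)" Suc UNIV] prob_space_distr[OF measurable_xi] by simp
  also have "(\<integral>\<^sup>+f. F f \<partial>?P) = (\<integral>\<^sup>+\<omega>. F (\<lambda>i. xi i \<omega>) \<partial>M)"
    unfolding law[symmetric] by (subst nn_integral_distr) auto
  finally show ?thesis .
qed

lemma nn_integral_head_tail_power:
  "(\<integral>\<^sup>+\<omega>. (ennreal (xi 0 \<omega>) * perpetuity (\<lambda>i. xi (Suc i) \<omega>)) ^ k \<partial>M)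
    = mom M xi (real k) * perp_mom M xi (real k)"
proof -
  have "(\<integral>\<^sup>+\<omega>. (ennreal (xi 0 \<omega>) * perpetuity (\<lambda>i. xi (Suc i) \<omega>)) ^ k \<partial>M)
      = (\<integral>\<^sup>+\<omega>. ennreal (xi 0 \<omega>) ^ k \<partial>M) * (\<integral>\<^sup>+\<omega>. perpetuity (\<lambda>i. xi (Suc i) \<omega>) ^ k \<partial>M)"
    using indep_var_nn_integral_mult[OF indep_var_head_tail,
        of "\<lambda>v. ennreal (v 0) ^ k" "\<lambda>v. perpetuity v ^ k"]
    by (simp add: power_mult_distrib)
  also have "(\<integral>\<^sup>+\<omega>. ennreal (xi 0 \<omega>) ^ k \<partial>M) = mom M xi (real k)"
    unfolding mom_def using xi_pos
    by (intro nn_integral_cong) (simp add: ennreal_power less_imp_le powr_realpow)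
  also have "(\<integral>\<^sup>+\<omega>. perpetuity (\<lambda>i. xi (Suc i) \<omega>) ^ k \<partial>M) = perp_mom M xi (real k)"
    using nn_integral_shift[of "\<lambda>v. perpetuity v ^ k"]
    by (simp add: perp_mom_def ennpow_of_nat perp_eq_perpetuity)
  finally show ?thesis .
qed

lemma perp_mom_binomial:
  "perp_mom M xi (real n) = (\<Sum>k\<le>n. of_nat (n choose k) * mom M xi (real k) * perp_mom M xi (real k))"
proof -
  have "perp_mom M xi (real n)
      = (\<integral>\<^sup>+\<omega>. (ennreal (xi 0 \<omega>) * perpetuity (\<lambda>i. xi (Suc i) \<omega>) + 1) ^ n \<partial>M)"
    unfolding perp_mom_def ennpow_of_nat perp_eq_perpetuity using xi_pos
    by (intro nn_integral_cong) (subst perpetuity_Suc, auto simp: less_imp_le add.commute)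
  also have "\<dots> = (\<Sum>k\<le>n. of_nat (n choose k)
      * (\<integral>\<^sup>+\<omega>. (ennreal (xi 0 \<omega>) * perpetuity (\<lambda>i. xi (Suc i) \<omega>)) ^ k \<partial>M))"
    by (simp add: binomial_ring nn_integral_sum nn_integral_cmult)
  finally show ?thesis by (simp add: nn_integral_head_tail_power mult.assoc)
qed

lemma perp_mom_of_nat:
  assumes "mom M xi (real n) < 1" "perp_mom M xi (real n) < \<infinity>"
  shows "perp_mom M xi (real n) = 1 / (1 - mom M xi (real n)) *
    (\<Sum>k<n. of_nat (n choose k) * mom M xi (real k) * perp_mom M xi (real k))"
proof (rule ennreal_affine_fixpoint)
  show "perp_mom M xi (real n) = (\<Sum>k<n. of_nat (n choose k) * mom M xi (real k) * perp_mom M xi (real k))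
      + mom M xi (real n) * perp_mom M xi (real n)"
    by (subst perp_mom_binomial) (simp add: lessThan_Suc_atMost[symmetric] mult.assoc)
qed (use assms in auto)

end

theorem theorem2:
  fixes M :: "'a measure" and xi :: "nat \<Rightarrow> 'a \<Rightarrow> real" and p :: real
  assumes "prob_space M"
    and "\<And>i. xi i \<in> borel_measurable M"
    and "prob_space.indep_vars M (\<lambda>_. borel) xi UNIV"
    and "\<And>i. distr M borel (xi i) = distr M borel (xi 0)"
    and "\<And>i \<omega>. \<omega> \<in> space M \<Longrightarrow> xi i \<omega> > 0"
    and "p \<ge> 1"
  shows "(perp_mom M xi p < \<infinity> \<longleftrightarrow> mom M xi p < 1)
    \<and> (mom M xi p < 1 \<longrightarrow>
         (\<forall>q. 1 \<le> q \<and> q \<le> p \<longrightarrow> mom M xi q < 1)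
       \<and> perp_mom M xi p \<le> ennreal ((1 - enn2real (mom M xi p) powr (1 / p)) powr (- p))
       \<and> (\<forall>n::nat. p = real n \<longrightarrow>
            perp_mom M xi p = (1 / (1 - mom M xi p)) *
              (\<Sum>k<n. of_nat (n choose k) * mom M xi (real k) * perp_mom M xi (real k))))"
proof -
  interpret positive_iid_sequence M xi
    by (rule positive_iid_sequence.intro[OF assms(1)], unfold_locales) (use assms in auto)
  have p: "p \<ge> 1" by fact
  have finite_iff: "perp_mom M xi p < \<infinity> \<longleftrightarrow> mom M xi p < 1"
  proof
    show "mom M xi p < 1" if "perp_mom M xi p < \<infinity>"
      using that perp_mom_eq_top[OF p] by (metis not_le order_less_irrefl)
    show "perp_mom M xi p < \<infinity>" if "mom M xi p < 1"
      using perp_mom_le[OF p that] by (simp add: le_less_trans)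
  qed
  moreover have "perp_mom M xi p = 1 / (1 - mom M xi p) *
      (\<Sum>k<n. of_nat (n choose k) * mom M xi (real k) * perp_mom M xi (real k))"
    if "mom M xi p < 1" "p = real n" for n
    using perp_mom_of_nat[of n] finite_iff that by simp
  ultimately show ?thesis
    using perp_mom_le[OF p] mom_less_one_mono by fastforce
qed

end
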